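(* Let $\mathcal A\in\mathbb C^{n_1\times n_1\times n_3}$ with $\mathrm{ind}(\mathcal A)=k$, let $\mathcal A^-$ be a fixed element of $\mathcal A\{1\}$, and let $\mathcal X\in\mathbb C^{n_1\times n_1\times n_3}$. The following are equivalent: (a) $\mathcal X=\mathcal A^{-,D}$; (b) $\mathcal X\mathcal A\mathcal X=\mathcal X$, $\mathcal X\mathcal A^k=\mathcal A^-\mathcal A^k$, $\mathcal A\mathcal X\mathcal A=\mathcal A\mathcal A^D\mathcal A$ and $\mathcal A\mathcal X=\mathcal A\mathcal A^D$; (c) $\mathcal A^-\mathcal A\mathcal X=\mathcal X$, $\mathcal X\mathcal A^k=\mathcal A^-\mathcal A^k$ and $\mathcal X=\mathcal X\mathcal A\mathcal A^D$; (d) $\mathcal A^-\mathcal A\mathcal X\mathcal A\mathcal A^D=\mathcal X$ and $\mathcal A\mathcal X\mathcal A^k=\mathcal A^k$; (e) $\mathcal A^-\mathcal A\mathcal A^D\mathcal A=\mathcal X\mathcal A$, $\mathcal A^k\mathcal X=\mathcal A^k\mathcal A^D$ and $\mathcal X=\mathcal X\mathcal A\mathcal A^D$.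
   Context: Fix a nonsingular matrix $M\in\mathbb C^{n_3\times n_3}$. For $\mathcal C\in\mathbb C^{n_1\times n_2\times n_3}$ let $\widehat{\mathcal C}=\mathcal C\times_3M$, i.e. $\widehat{\mathcal C}_{ijk}=\sum_{l=1}^{n_3}M_{kl}\mathcal C_{ijl}$, and let $\widehat{\mathcal C}^{(i)}$ denote its $i$-th frontal slice. The M-product $\mathcal C\star_M\mathcal D$ of $\mathcal C\in\mathbb C^{n_1\times n_2\times n_3}$ and $\mathcal D\in\mathbb C^{n_2\times l\times n_3}$ is the unique tensor with $\widehat{\mathcal C\star_M\mathcal D}^{(i)}=\widehat{\mathcal C}^{(i)}\widehat{\mathcal D}^{(i)}$ for all $i\in[n_3]$. Juxtaposition of tensors denotes the M-product; powers are M-product powers with $\mathcal A^0=\mathcal I$ where $\widehat{\mathcal I}^{(i)}=I_{n_1}$. $\mathcal A\{1\}$ is the set of all $\mathcal W$ with $\mathcal A\mathcal W\mathcal A=\mathcal A$. The index $\mathrm{ind}(\mathcal A)$ is $\max_{i}\mathrm{ind}(\widehat{\mathcal A}^{(i)})$, where the index of a square matrix $B$ is the least $k\ge0$ with $\mathrm{rank}(B^{k+1})=\mathrm{rank}(B^k)$. For $\mathrm{ind}(\mathcal A)=k$, the Drazin inverse $\mathcal A^D$ is the unique $\mathcal W$ with $\mathcal W\mathcal A^{k+1}=\mathcal A^k$, $\mathcal W\mathcal A\mathcal W=\mathcal W$, $\mathcal A\mathcal W=\mathcal W\mathcal A$. The 1-D inverse is $\mathcal A^{-,D}=\mathcal A^-\mathcal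 A\mathcal A^D$. *)

theory Defs
  imports "HOL-Analysis.Analysis"
begin

text \<open>A third-order tensor C in C^(n1 x n1 x n3) is represented by its frontal slices:
  C $ k $ i $ j is the entry C_{ijk}; the index types 'n (size n1) and 'm (size n3) are finite.\<close>

type_synonym ('n, 'm) tensor = "complex ^ 'n ^ 'n ^ 'm"

definition mode3 :: "complex ^ 'm ^ 'm \<Rightarrow> ('n::finite, 'm::finite) tensor \<Rightarrow> ('n, 'm) tensor" where
  "mode3 M C = (\<chi> k i j. \<Sum>l\<in>UNIV. M $ k $ l * C $ l $ i $ j)"

text \<open>M-product: the tensor whose transformed slices are the products of the transformed slices
  (for nonsingular M this is the unique such tensor).\<close>
definition mprod :: "complex ^ 'm ^ 'm \<Rightarrow> ('n::finite, 'm::finite) tensor \<Rightarrow> ('n, 'm) tensor \<Rightarrow> ('n, 'm) tensor" where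
  "mprod M C D = mode3 (matrix_inv M) (\<chi> k. mode3 M C $ k ** mode3 M D $ k)"

definition tid :: "complex ^ 'm ^ 'm \<Rightarrow> ('n::finite, 'm::finite) tensor" where
  "tid M = mode3 (matrix_inv M) (\<chi> k. mat 1)"

primrec tpow :: "complex ^ 'm ^ 'm \<Rightarrow> ('n::finite, 'm::finite) tensor \<Rightarrow> nat \<Rightarrow> ('n, 'm) tensor" where
  "tpow M A 0 = tid M"
| "tpow M A (Suc j) = mprod M (tpow M A j) A"

definition mpow :: "'a::semiring_1 ^ 'n ^ 'n \<Rightarrow> nat \<Rightarrow> 'a ^ 'n ^ 'n" where
  "mpow B k = ((\<lambda>X. X ** B) ^^ k) (mat 1)"

definition mat_index :: "complex ^ 'n ^ 'n \<Rightarrow> nat" where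
  "mat_index B = (LEAST k. rank (mpow B (k + 1)) = rank (mpow B k))"

definition tind :: "complex ^ 'm ^ 'm \<Rightarrow> ('n::finite, 'm::finite) tensor \<Rightarrow> nat" where
  "tind M A = Max (range (\<lambda>i. mat_index (mode3 M A $ i)))"

definition one_inverses :: "complex ^ 'm ^ 'm \<Rightarrow> ('n::finite, 'm::finite) tensor \<Rightarrow> ('n, 'm) tensor set" where
  "one_inverses M A = {W. mprod M (mprod M A W) A = A}"

definition drazin :: "complex ^ 'm ^ 'm \<Rightarrow> ('n::finite, 'm::finite) tensor \<Rightarrow> ('n, 'm) tensor" where
  "drazin M A = (THE W. mprod M W (tpow M A (tind M A + 1)) = tpow M A (tind M A)
                      \<and> mprod M (mprod M W A) W = W \<and> mprod M A W = mprod M W A)"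

definition one_D_inverse :: "complex ^ 'm ^ 'm \<Rightarrow> ('n::finite, 'm::finite) tensor \<Rightarrow> ('n, 'm) tensor \<Rightarrow> ('n, 'm) tensor" where
  "one_D_inverse M A Am = mprod M (mprod M Am A) (drazin M A)"

end

theory Submission
  imports Defs
begin

text \<open>The M-product makes the tensors a monoid, isomorphic through the mode-3 product with M to
  tuples of matrices under slicewise multiplication, and the statement is an identity in that monoid.
  For a Drazin inverse d of a with index k one has a d = a^k (d^(k+1) a), so any X with X = X a d
  and X a^k = g a^k equals g a d; each of the characterisations reduces to this.
  The tensor Drazin inverse exists because every slice B has rank B^(k+1) = rank B^k, which yields
  one-sided factors B^(k+1) X = B^k = Y B^(k+1); in any monoid such factors x, y give the Drazin
  inverse a^k x^(k+1) (Drazin's construction).\<close>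

section \<open>Drazin inverses in a monoid\<close>

context monoid
begin

primrec pow :: "'a \<Rightarrow> nat \<Rightarrow> 'a" where
  "pow a 0 = \<^bold>1"
| "pow a (Suc n) = pow a n \<^bold>* a"

lemma pow_add: "pow a (m + n) = pow a m \<^bold>* pow a n"
  by (induct n) (simp_all add: assoc)

lemma pow_Suc': "pow a (Suc n) = a \<^bold>* pow a n"
  using pow_add[of a "Suc 0" n] by simp

lemma commute_pow: "b \<^bold>* a = a \<^bold>* b \<Longrightarrow> b \<^bold>* pow a n = pow a n \<^bold>* b"
  by (induct n) (simp_all, metis assoc)

lemma commute_pow_pow: "b \<^bold>* a = a \<^bold>* b \<Longrightarrow> pow b m \<^bold>* pow a n = pow a n \<^bold>* pow b m"
  by (metis commute_pow)

definition is_drazin_inverse :: "'a \<Rightarrow> nat \<Rightarrow> 'a \<Rightarrow> bool" where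
  "is_drazin_inverse a k d \<longleftrightarrow>
     d \<^bold>* pow a (Suc k) = pow a k \<and> d \<^bold>* a \<^bold>* d = d \<and> a \<^bold>* d = d \<^bold>* a"

lemma pow_right_factor_iterate:
  assumes "pow a (Suc k) \<^bold>* x = pow a k"
  shows "pow a (k + j) \<^bold>* pow x j = pow a k"
proof (induct j)
  case (Suc j)
  have "pow a (k + Suc j) = pow a j \<^bold>* pow a (Suc k)"
    by (metis add.commute add_Suc_right pow_add)
  then have "pow a (k + Suc j) \<^bold>* pow x (Suc j) = pow a j \<^bold>* (pow a (Suc k) \<^bold>* x) \<^bold>* pow x j"
    by (simp only: pow_Suc' assoc)
  also have "\<dots> = pow a (k + j) \<^bold>* pow x j"
    by (metis assms add.commute pow_add)
  finally show ?case
    using Suc by simp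
qed simp

lemma pow_left_factor_iterate:
  assumes "y \<^bold>* pow a (Suc k) = pow a k"
  shows "pow y j \<^bold>* pow a (k + j) = pow a k"
proof (induct j)
  case (Suc j)
  have "pow a (k + Suc j) = pow a (Suc k) \<^bold>* pow a j"
    by (metis add_Suc_right add_Suc pow_add)
  then have "pow y (Suc j) \<^bold>* pow a (k + Suc j) = pow y j \<^bold>* (y \<^bold>* pow a (Suc k)) \<^bold>* pow a j"
    by (simp only: pow.simps(2) assoc)
  also have "\<dots> = pow y j \<^bold>* pow a (k + j)"
    by (simp only: assms pow_add assoc)
  finally show ?case
    using Suc by simp
qed simp

lemma pow_left_right_factor_commute:
  assumes x: "pow a (Suc k) \<^bold>* x = pow a k" and y: "y \<^bold>* pow a (Suc k) = pow a k"
  shows "pow y j \<^bold>* pow a k = pow a k \<^bold>* pow x j"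
proof -
  have "pow y j \<^bold>* pow a k = pow y j \<^bold>* (pow a (k + j) \<^bold>* pow x j)"
    by (simp only: pow_right_factor_iterate[OF x])
  also have "\<dots> = pow a k \<^bold>* pow x j"
    by (simp only: pow_left_factor_iterate[OF y] flip: assoc)
  finally show ?thesis .
qed

theorem drazin_inverse_exists:
  assumes x: "pow a (Suc k) \<^bold>* x = pow a k" and y: "y \<^bold>* pow a (Suc k) = pow a k"
  shows "is_drazin_inverse a k (pow a k \<^bold>* pow x (Suc k))"
proof -
  define d where "d = pow a k \<^bold>* pow x (Suc k)"
  have d_left: "d = pow y (Suc k) \<^bold>* pow a k"
    unfolding d_def by (simp only: pow_left_right_factor_commute[OF x y])
  have ad: "a \<^bold>* d = pow a k \<^bold>* pow x k"
    unfolding d_def by (metis assoc pow_Suc' x)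
  have da: "d \<^bold>* a = pow y k \<^bold>* pow a k"
    unfolding d_left by (metis assoc pow.simps(2) y)
  have "d \<^bold>* pow a (Suc k) = pow y (Suc k) \<^bold>* pow a (k + Suc k)"
    by (simp only: d_left assoc pow_add)
  then have power: "d \<^bold>* pow a (Suc k) = pow a k"
    by (simp only: pow_left_factor_iterate[OF y])
  have "d \<^bold>* a \<^bold>* d = d \<^bold>* (a \<^bold>* d)"
    by (simp only: assoc)
  also have "\<dots> = pow y (Suc k) \<^bold>* pow a k \<^bold>* (pow a k \<^bold>* pow x k)"
    by (subst ad) (simp only: d_left)
  also have "\<dots> = pow y (Suc k) \<^bold>* (pow a (k + k) \<^bold>* pow x k)"
    by (simp only: assoc pow_add)
  also have "\<dots> = d"
    by (simp only: pow_right_factor_iterate[OF x] d_left)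
  finally have outer: "d \<^bold>* a \<^bold>* d = d" .
  have "a \<^bold>* d = d \<^bold>* a"
    by (simp only: ad da pow_left_right_factor_commute[OF x y])
  with power outer show ?thesis
    unfolding is_drazin_inverse_def d_def by blast
qed

context
  fixes a d :: 'a and k :: nat
  assumes drazin: "is_drazin_inverse a k d"
begin

lemma drazin_commute: "a \<^bold>* d = d \<^bold>* a"
  and drazin_outer: "d \<^bold>* a \<^bold>* d = d"
  and drazin_pow_Suc: "d \<^bold>* pow a (Suc k) = pow a k"
  using drazin by (simp_all add: is_drazin_inverse_def)

lemma pow_mult_drazin_pow: "pow a j \<^bold>* pow d (Suc j) = d"
proof (induct j)
  case (Suc j)
  have "a \<^bold>* pow d (Suc j) = pow d (Suc j) \<^bold>* a"
    by (rule commute_pow[OF drazin_commute])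
  then have "pow a (Suc j) \<^bold>* pow d (Suc (Suc j)) = pow a j \<^bold>* (pow d (Suc j) \<^bold>* (a \<^bold>* d))"
    by (metis assoc pow.simps(2) pow_Suc')
  also have "\<dots> = pow a j \<^bold>* pow d (Suc j)"
    using drazin_outer by (metis assoc pow.simps(2))
  finally show ?case
    using Suc by simp
qed simp

lemma drazin_pow_mult_pow: "pow d (Suc j) \<^bold>* pow a j = d"
  using pow_mult_drazin_pow[of j] commute_pow_pow[OF drazin_commute] by metis

lemma pow_mult_mult_drazin: "pow a k \<^bold>* a \<^bold>* d = pow a k"
  using commute_pow[OF drazin_commute[symmetric], of "Suc k"] drazin_pow_Suc by (simp add: assoc)

lemma drazin_mult_pow: "a \<^bold>* d \<^bold>* pow a k = pow a k"
  by (metis assoc drazin_commute drazin_pow_Suc pow_Suc')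

lemma pow_mult_drazin_mult: "pow a k \<^bold>* d \<^bold>* a = pow a k"
  by (metis drazin_commute pow_mult_mult_drazin assoc)

lemma mult_drazin_eq_pow_mult: "a \<^bold>* d = pow a k \<^bold>* (pow d (Suc k) \<^bold>* a)"
  by (metis assoc drazin_commute pow_mult_drazin_pow)

end

theorem drazin_inverse_unique:
  assumes "is_drazin_inverse a k d" and "is_drazin_inverse a k d'"
  shows "d = d'"
proof -
  have "d = d \<^bold>* a \<^bold>* d'" if "is_drazin_inverse a k d" "is_drazin_inverse a k d'" for d d'
  proof -
    have "d = pow d (Suc k) \<^bold>* pow a k"
      using drazin_pow_mult_pow[OF that(1)] by simp
    also have "\<dots> = pow d (Suc k) \<^bold>* pow a k \<^bold>* a \<^bold>* d'"
      by (subst pow_mult_mult_drazin[OF that(2), symmetric]) (simp only: assoc)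
    also have "\<dots> = d \<^bold>* a \<^bold>* d'"
      using drazin_pow_mult_pow[OF that(1)] by simp
    finally show ?thesis .
  qed
  moreover have "d = d' \<^bold>* a \<^bold>* d" if "is_drazin_inverse a k d" "is_drazin_inverse a k d'" for d d'
  proof -
    have "d = pow a k \<^bold>* pow d (Suc k)"
      using pow_mult_drazin_pow[OF that(1)] by simp
    also have "\<dots> = d' \<^bold>* a \<^bold>* (pow a k \<^bold>* pow d (Suc k))"
      by (subst drazin_pow_Suc[OF that(2), symmetric]) (simp only: pow_Suc' assoc)
    also have "\<dots> = d' \<^bold>* a \<^bold>* d"
      using pow_mult_drazin_pow[OF that(1)] by simp
    finally show ?thesis .
  qed
  ultimately show ?thesis
    using assms by metis
qed

context
  fixes a d g :: 'a and k :: nat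
  assumes drazin: "is_drazin_inverse a k d" and inner: "a \<^bold>* g \<^bold>* a = a"
begin

private lemma inner_assoc: "a \<^bold>* (g \<^bold>* (a \<^bold>* c)) = a \<^bold>* c" "a \<^bold>* (g \<^bold>* a) = a"
  using inner by (metis assoc)+

private lemma outer_assoc: "d \<^bold>* (a \<^bold>* (d \<^bold>* c)) = d \<^bold>* c" "d \<^bold>* (a \<^bold>* d) = d"
  using drazin_outer[OF drazin] by (metis assoc)+

lemma eq_one_D_inverse_if:
  assumes "X \<^bold>* a \<^bold>* d = X" and "X \<^bold>* pow a k = g \<^bold>* pow a k"
  shows "X = g \<^bold>* a \<^bold>* d"
  using assms mult_drazin_eq_pow_mult[OF drazin] by (metis assoc)

lemma one_D_inverse_mult_pow: "g \<^bold>* a \<^bold>* d \<^bold>* pow a k = g \<^bold>* pow a k"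
  using drazin_mult_pow[OF drazin] by (metis assoc)

lemma pow_mult_one_D_inverse: "pow a k \<^bold>* (g \<^bold>* a \<^bold>* d) = pow a k \<^bold>* d"
  using pow_mult_drazin_mult[OF drazin] by (metis assoc inner_assoc outer_assoc)

lemma one_D_inverse_char_b:
  "X = g \<^bold>* a \<^bold>* d \<longleftrightarrow>
     X \<^bold>* a \<^bold>* X = X \<and> X \<^bold>* pow a k = g \<^bold>* pow a k \<and> a \<^bold>* X \<^bold>* a = a \<^bold>* d \<^bold>* a \<and> a \<^bold>* X = a \<^bold>* d"
proof
  assume "X = g \<^bold>* a \<^bold>* d"
  then show "X \<^bold>* a \<^bold>* X = X \<and> X \<^bold>* pow a k = g \<^bold>* pow a k \<and> a \<^bold>* X \<^bold>* a = a \<^bold>* d \<^bold>* a \<and> a \<^bold>* X = a \<^bold>* d"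
    using one_D_inverse_mult_pow by (simp add: assoc inner_assoc outer_assoc)
next
  assume "X \<^bold>* a \<^bold>* X = X \<and> X \<^bold>* pow a k = g \<^bold>* pow a k \<and> a \<^bold>* X \<^bold>* a = a \<^bold>* d \<^bold>* a \<and> a \<^bold>* X = a \<^bold>* d"
  then show "X = g \<^bold>* a \<^bold>* d"
    by (metis assoc eq_one_D_inverse_if)
qed

lemma one_D_inverse_char_c:
  "X = g \<^bold>* a \<^bold>* d \<longleftrightarrow>
     g \<^bold>* a \<^bold>* X = X \<and> X \<^bold>* pow a k = g \<^bold>* pow a k \<and> X = X \<^bold>* a \<^bold>* d"
  using one_D_inverse_mult_pow eq_one_D_inverse_if by (auto simp: assoc inner_assoc outer_assoc)

lemma one_D_inverse_char_d:
  "X = g \<^bold>* a \<^bold>* d \<longleftrightarrow> g \<^bold>* a \<^bold>* X \<^bold>* a \<^bold>* d = X \<and> a \<^bold>* X \<^bold>* pow a k = pow a k"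
proof
  assume "X = g \<^bold>* a \<^bold>* d"
  then show "g \<^bold>* a \<^bold>* X \<^bold>* a \<^bold>* d = X \<and> a \<^bold>* X \<^bold>* pow a k = pow a k"
    using drazin_mult_pow[OF drazin] by (simp add: assoc inner_assoc outer_assoc)
next
  assume h: "g \<^bold>* a \<^bold>* X \<^bold>* a \<^bold>* d = X \<and> a \<^bold>* X \<^bold>* pow a k = pow a k"
  then have "X = g \<^bold>* (a \<^bold>* X \<^bold>* pow a k) \<^bold>* (pow d (Suc k) \<^bold>* a)"
    using mult_drazin_eq_pow_mult[OF drazin] by (metis assoc)
  also have "\<dots> = g \<^bold>* a \<^bold>* d"
    using h mult_drazin_eq_pow_mult[OF drazin] by (metis assoc)
  finally show "X = g \<^bold>* a \<^bold>* d" .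
qed

lemma one_D_inverse_char_e:
  "X = g \<^bold>* a \<^bold>* d \<longleftrightarrow>
     g \<^bold>* a \<^bold>* d \<^bold>* a = X \<^bold>* a \<and> pow a k \<^bold>* X = pow a k \<^bold>* d \<and> X = X \<^bold>* a \<^bold>* d"
  using pow_mult_one_D_inverse by (auto simp: assoc outer_assoc) (metis assoc outer_assoc)

end

end

section \<open>Powers of a square matrix\<close>

lemma mpow_0: "mpow B 0 = mat 1"
  by (simp add: mpow_def)

lemma mpow_Suc: "mpow B (Suc j) = mpow B j ** B"
  by (simp add: mpow_def)

lemma mpow_Suc': "mpow B (Suc j) = B ** mpow B j"
  by (induct j) (simp_all add: mpow_Suc mpow_0, metis matrix_mul_assoc)

lemma exists_right_factor_of_range_subset:
  fixes A :: "'a::field^'n^'m" and C :: "'a^'p^'m"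
  assumes "range ((*v) C) \<subseteq> range ((*v) A)"
  shows "\<exists>X. A ** X = C"
proof -
  obtain h where h: "Vector_Spaces.linear (*s) (*s) h" "\<forall>v\<in>range ((*v) A). A *v h v = v"
    using vec.linear_exists_right_inverse_on[OF matrix_vector_mul_linear_gen vec.subspace_UNIV]
    by auto
  have lin: "Vector_Spaces.linear (*s) (*s) (h \<circ> (*v) C)"
    using h(1) by (rule Vector_Spaces.linear_compose[OF matrix_vector_mul_linear_gen])
  have "A ** matrix (h \<circ> (*v) C) *v x = C *v x" for x
  proof -
    obtain y where "C *v x = A *v y"
      using assms by blast
    then show ?thesis
      using h(2) by (simp add: matrix_vector_mul_assoc[symmetric] matrix_works[OF lin])
  qed
  then show ?thesis
    by (metis matrix_eq)
qed

lemma exists_left_factor_of_kernel_subset: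
  fixes A :: "'a::field^'n^'m" and C :: "'a^'n^'p"
  assumes "\<And>y. A *v y = 0 \<Longrightarrow> C *v y = 0"
  shows "\<exists>S. S ** A = C"
proof -
  obtain h where h: "Vector_Spaces.linear (*s) (*s) h" "\<forall>v\<in>range ((*v) A). A *v h v = v"
    using vec.linear_exists_right_inverse_on[OF matrix_vector_mul_linear_gen vec.subspace_UNIV]
    by auto
  have lin: "Vector_Spaces.linear (*s) (*s) ((*v) C \<circ> h)"
    using h(1) by (rule Vector_Spaces.linear_compose[OF _ matrix_vector_mul_linear_gen])
  have "matrix ((*v) C \<circ> h) ** A *v x = C *v x" for x
  proof -
    have "A *v (h (A *v x) - x) = 0"
      using h(2) by (simp add: matrix_vector_mult_diff_distrib)
    then have "C *v (h (A *v x) - x) = 0"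
      by (rule assms)
    then show ?thesis
      by (simp add: matrix_vector_mul_assoc[symmetric] matrix_works[OF lin] matrix_vector_mult_diff_distrib)
  qed
  then show ?thesis
    by (metis matrix_eq)
qed

definition row_space :: "'a::field^'n^'m \<Rightarrow> ('a^'n) set" where
  "row_space A = range ((*v) (transpose A))"

lemma subspace_row_space: "vec.subspace (row_space A)"
  unfolding row_space_def by (rule vec.subspace_image[OF vec.subspace_UNIV])

lemma span_columns_eq_range:
  fixes A :: "'a::field^'n^'m"
  shows "vec.span (columns A) = range ((*v) A)"
proof
  show "vec.span (columns A) \<subseteq> range ((*v) A)"
  proof (rule vec.span_minimal)
    show "columns A \<subseteq> range ((*v) A)"
      by (auto simp: columns_def column_def matrix_vector_mult_def axis_def vec_eq_iff
          if_distrib sum.delta' cong: if_cong intro!: image_eqI[where x = "axis _ 1"])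
    show "vec.subspace (range ((*v) A))"
      by (rule vec.subspace_image[OF vec.subspace_UNIV])
  qed
  show "range ((*v) A) \<subseteq> vec.span (columns A)"
    using matrix_vector_mult_in_columnspace_gen by blast
qed

lemma rank_eq_dim_row_space: "rank A = vec.dim (row_space A)"
  unfolding row_rank_def_gen row_space_def
  by (metis columns_transpose span_columns_eq_range vec.dim_span)

lemma row_space_mpow_Suc:
  "row_space (mpow B (Suc j)) = (*v) (transpose B) ` row_space (mpow B j)"
  by (auto simp: row_space_def mpow_Suc matrix_transpose_mul matrix_vector_mul_assoc[symmetric])

lemma row_space_mpow_Suc_subset: "row_space (mpow B (Suc j)) \<subseteq> row_space (mpow B j)"
  by (auto simp: row_space_def mpow_Suc' matrix_transpose_mul matrix_vector_mul_assoc[symmetric])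

lemma rank_mpow_Suc_le: "rank (mpow B (Suc j)) \<le> rank (mpow B j)"
  unfolding rank_eq_dim_row_space by (rule vec.dim_subset[OF row_space_mpow_Suc_subset])

lemma rank_mpow_stable_at_mat_index:
  "rank (mpow B (Suc (mat_index B))) = rank (mpow B (mat_index B))"
proof -
  have "\<exists>j. rank (mpow B (j + 1)) = rank (mpow B j)"
  proof (rule ccontr)
    assume "\<nexists>j. rank (mpow B (j + 1)) = rank (mpow B j)"
    then have decrease: "rank (mpow B (Suc j)) < rank (mpow B j)" for j
      using rank_mpow_Suc_le[of B j] by (simp add: order_less_le)
    have "rank (mpow B j) + j \<le> rank (mpow B 0)" for j
    proof (induct j)
      case (Suc j)
      then show ?case
        using decrease[of j] by simp
    qed simp
    from this[of "Suc (rank (mpow B 0))"] show False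
      by simp
  qed
  then show ?thesis
    unfolding mat_index_def by (metis (mono_tags, lifting) LeastI_ex Suc_eq_plus1)
qed

lemma row_space_mpow_stable:
  assumes "mat_index B \<le> k"
  shows "row_space (mpow B (Suc k)) = row_space (mpow B k)"
  using assms
proof (induct k rule: dec_induct)
  case base
  show ?case
    using rank_mpow_stable_at_mat_index[of B] unfolding rank_eq_dim_row_space
    by (intro vec.subspace_dim_equal subspace_row_space row_space_mpow_Suc_subset) simp
next
  case (step k)
  then show ?case
    by (metis row_space_mpow_Suc)
qed

lemma inj_on_subspace_if_image_eq:
  fixes A :: "'a::field^'n^'n"
  assumes V: "vec.subspace V" and img: "(*v) A ` V = V"
  shows "inj_on ((*v) A) V"
proof -
  obtain Bs where Bs: "Bs \<subseteq> V" "vec.independent Bs" "V \<subseteq> vec.span Bs" "card Bs = vec.dim V"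
    by (rule vec.basis_exists)
  have fin: "finite Bs"
    using Bs(2) by (rule vec.finiteI_independent)
  have span_Bs: "vec.span Bs = V"
    using Bs V vec.span_minimal by blast
  have spanning: "V \<subseteq> vec.span ((*v) A ` Bs)"
    using vec.span_image[of A Bs] span_Bs img by simp
  have "vec.dim V \<le> card ((*v) A ` Bs)"
    using spanning fin by (intro vec.dim_le_card) simp_all
  moreover have "card ((*v) A ` Bs) \<le> card Bs"
    using fin by (rule card_image_le)
  ultimately have card_eq: "card ((*v) A ` Bs) = card Bs"
    using Bs(4) by simp
  have "vec.independent ((*v) A ` Bs)"
    using Bs(1) img spanning fin card_eq Bs(4)
    by (intro vec.card_le_dim_spanning[OF _ spanning]) auto
  moreover have "inj_on ((*v) A) Bs"
    using card_eq fin by (simp add: inj_on_iff_eq_card)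
  ultimately show ?thesis
    using vec.inj_on_span_independent_image span_Bs by metis
qed

lemma mpow_left_factor:
  assumes "mat_index B \<le> k"
  shows "\<exists>Y. Y ** mpow B (Suc k) = mpow B k"
proof -
  have "range ((*v) (transpose (mpow B k))) \<subseteq> range ((*v) (transpose (mpow B (Suc k))))"
    using row_space_mpow_stable[OF assms] by (simp add: row_space_def)
  then obtain X where "transpose (mpow B (Suc k)) ** X = transpose (mpow B k)"
    using exists_right_factor_of_range_subset by blast
  then have "transpose X ** mpow B (Suc k) = mpow B k"
    by (metis matrix_transpose_mul transpose_transpose)
  then show ?thesis ..
qed

text \<open>Since \<^const>\<open>rank\<close> is the row rank, the stabilised spaces are row spaces; the right factor
  therefore comes from kernels: \<open>B\<^sup>T\<close> maps the stable row space onto itself, hence injectively.\<close>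

lemma mpow_right_factor:
  assumes "mat_index B \<le> k"
  shows "\<exists>X. mpow B (Suc k) ** X = mpow B k"
proof -
  have stable: "(*v) (transpose B) ` row_space (mpow B k) = row_space (mpow B k)"
    using row_space_mpow_stable[OF assms] by (simp add: row_space_mpow_Suc)
  have "transpose (mpow B k) *v y = 0" if "transpose (mpow B (Suc k)) *v y = 0" for y
  proof (rule inj_onD[OF inj_on_subspace_if_image_eq[OF subspace_row_space stable]])
    show "transpose B *v (transpose (mpow B k) *v y) = transpose B *v 0"
      using that by (metis matrix_transpose_mul matrix_vector_mul_assoc matrix_vector_mult_0_right mpow_Suc)
    show "transpose (mpow B k) *v y \<in> row_space (mpow B k)" "0 \<in> row_space (mpow B k)"
      using vec.subspace_0[OF subspace_row_space] by (auto simp: row_space_def)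
  qed
  then obtain S where "S ** transpose (mpow B (Suc k)) = transpose (mpow B k)"
    using exists_left_factor_of_kernel_subset by blast
  then have "mpow B (Suc k) ** transpose S = mpow B k"
    by (metis matrix_transpose_mul transpose_transpose)
  then show ?thesis ..
qed

section \<open>The M-product\<close>

lemma mode3_mode3: "mode3 N (mode3 N' C) = mode3 (N ** N') C"
proof -
  have "(\<Sum>l\<in>UNIV. (\<Sum>p\<in>UNIV. N$k$p * N'$p$l) * C$l$i$j)
      = (\<Sum>p\<in>UNIV. N$k$p * (\<Sum>l\<in>UNIV. N'$p$l * C$l$i$j))" for k i j
  proof -
    have "(\<Sum>l\<in>UNIV. (\<Sum>p\<in>UNIV. N$k$p * N'$p$l) * C$l$i$j)
        = (\<Sum>l\<in>UNIV. \<Sum>p\<in>UNIV. N$k$p * N'$p$l * C$l$i$j)"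
      by (simp add: sum_distrib_right)
    also have "\<dots> = (\<Sum>p\<in>UNIV. \<Sum>l\<in>UNIV. N$k$p * N'$p$l * C$l$i$j)"
      by (rule sum.swap)
    also have "\<dots> = (\<Sum>p\<in>UNIV. N$k$p * (\<Sum>l\<in>UNIV. N'$p$l * C$l$i$j))"
      by (simp add: sum_distrib_left mult.assoc)
    finally show ?thesis .
  qed
  then show ?thesis
    unfolding mode3_def matrix_matrix_mult_def by (simp add: vec_eq_iff)
qed

lemma mode3_mat_1: "mode3 (mat 1) C = C"
  by (simp add: mode3_def mat_def vec_eq_iff if_distrib[of "\<lambda>x. x * _"] sum.delta cong: if_cong)

lemma matrix_inv_right: "invertible M \<Longrightarrow> M ** matrix_inv M = mat 1"
  and matrix_inv_left: "invertible M \<Longrightarrow> matrix_inv M ** M = mat 1"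
  unfolding invertible_def matrix_inv_def by (metis (mono_tags, lifting) someI_ex)+

lemma mode3_mode3_inv: "invertible M \<Longrightarrow> mode3 M (mode3 (matrix_inv M) C) = C"
  and mode3_inv_mode3: "invertible M \<Longrightarrow> mode3 (matrix_inv M) (mode3 M C) = C"
  by (simp_all add: mode3_mode3 matrix_inv_right matrix_inv_left mode3_mat_1)

lemma mode3_inject: "invertible M \<Longrightarrow> mode3 M C = mode3 M D \<longleftrightarrow> C = D"
  by (metis mode3_inv_mode3)

lemma mode3_mprod: "invertible M \<Longrightarrow> mode3 M (mprod M C D) $ i = mode3 M C $ i ** mode3 M D $ i"
  by (simp add: mprod_def mode3_mode3_inv)

lemma mode3_tid: "invertible M \<Longrightarrow> mode3 M (tid M) $ i = mat 1"
  by (simp add: tid_def mode3_mode3_inv)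

lemma mprod_eq_iff:
  "invertible M \<Longrightarrow> mprod M C D = E \<longleftrightarrow> (\<forall>i. mode3 M C $ i ** mode3 M D $ i = mode3 M E $ i)"
  by (metis (mono_tags, lifting) mode3_inject mode3_mprod vec_eq_iff)

lemma monoid_mprod: "invertible M \<Longrightarrow> monoid (mprod M) (tid M)"
  by unfold_locales (simp_all add: mprod_eq_iff mode3_mprod mode3_tid matrix_mul_assoc)

lemma mode3_tpow: "invertible M \<Longrightarrow> mode3 M (tpow M A j) $ i = mpow (mode3 M A $ i) j"
  by (induct j) (simp_all add: mode3_tid mpow_0 mode3_mprod mpow_Suc)

lemma monoid_pow_eq_tpow:
  assumes "invertible M"
  shows "monoid.pow (mprod M) (tid M) A j = tpow M A j"
proof -
  interpret monoid "mprod M" "tid M"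
    using monoid_mprod[OF assms] .
  show ?thesis
    by (induct j) simp_all
qed

lemma mat_index_le_tind: "mat_index (mode3 M A $ i) \<le> tind M A"
  unfolding tind_def by (rule Max_ge) auto

lemma exists_tensor_of_slices: "invertible M \<Longrightarrow> \<exists>X. \<forall>i. mode3 M X $ i = F i"
  by (metis mode3_mode3_inv vec_lambda_beta)

lemma tpow_right_factor:
  assumes "invertible M" and "tind M A \<le> k"
  shows "\<exists>X. mprod M (tpow M A (Suc k)) X = tpow M A k"
proof -
  have "\<forall>i. \<exists>Xi. mpow (mode3 M A $ i) (Suc k) ** Xi = mpow (mode3 M A $ i) k"
    using mpow_right_factor mat_index_le_tind assms(2) order_trans by blast
  then obtain F where "\<And>i. mpow (mode3 M A $ i) (Suc k) ** F i = mpow (mode3 M A $ i) k"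
    by metis
  moreover obtain X where "\<And>i. mode3 M X $ i = F i"
    using exists_tensor_of_slices[OF assms(1)] by blast
  ultimately have "mprod M (tpow M A (Suc k)) X = tpow M A k"
    using assms(1) by (simp add: mprod_eq_iff mode3_tpow del: tpow.simps)
  then show ?thesis ..
qed

lemma tpow_left_factor:
  assumes "invertible M" and "tind M A \<le> k"
  shows "\<exists>Y. mprod M Y (tpow M A (Suc k)) = tpow M A k"
proof -
  have "\<forall>i. \<exists>Yi. Yi ** mpow (mode3 M A $ i) (Suc k) = mpow (mode3 M A $ i) k"
    using mpow_left_factor mat_index_le_tind assms(2) order_trans by blast
  then obtain F where "\<And>i. F i ** mpow (mode3 M A $ i) (Suc k) = mpow (mode3 M A $ i) k"
    by metis
  moreover obtain Y where "\<And>i. mode3 M Y $ i = F i"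
    using exists_tensor_of_slices[OF assms(1)] by blast
  ultimately have "mprod M Y (tpow M A (Suc k)) = tpow M A k"
    using assms(1) by (simp add: mprod_eq_iff mode3_tpow del: tpow.simps)
  then show ?thesis ..
qed

lemma drazin_is_drazin_inverse:
  assumes "invertible M"
  shows "monoid.is_drazin_inverse (mprod M) (tid M) A (tind M A) (drazin M A)"
proof -
  interpret T: monoid "mprod M" "tid M"
    using monoid_mprod[OF assms] .
  obtain X Y where "mprod M (tpow M A (Suc (tind M A))) X = tpow M A (tind M A)"
      and "mprod M Y (tpow M A (Suc (tind M A))) = tpow M A (tind M A)"
    using tpow_right_factor tpow_left_factor assms by blast
  then have "\<exists>!W. T.is_drazin_inverse A (tind M A) W"
    using T.drazin_inverse_exists T.drazin_inverse_unique by (metis monoid_pow_eq_tpow[OF assms])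
  then show ?thesis
    unfolding drazin_def T.is_drazin_inverse_def monoid_pow_eq_tpow[OF assms] Suc_eq_plus1[symmetric]
    by (rule theI')
qed

theorem theorem3p7:
  fixes M :: "complex ^ 'm::finite ^ 'm"
    and A Am X :: "('n::finite, 'm) tensor"
    and k :: nat
  assumes "invertible M"
    and "tind M A = k"
    and "Am \<in> one_inverses M A"
  defines "P \<equiv> mprod M" and "AD \<equiv> drazin M A" and "Ak \<equiv> tpow M A k"
  shows "(X = one_D_inverse M A Am
           \<longleftrightarrow> P (P X A) X = X \<and> P X Ak = P Am Ak \<and> P (P A X) A = P (P A AD) A \<and> P A X = P A AD)
       \<and> (X = one_D_inverse M A Am
           \<longleftrightarrow> P (P Am A) X = X \<and> P X Ak = P Am Ak \<and> X = P (P X A) AD)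
       \<and> (X = one_D_inverse M A Am
           \<longleftrightarrow> P (P (P (P Am A) X) A) AD = X \<and> P (P A X) Ak = Ak)
       \<and> (X = one_D_inverse M A Am
           \<longleftrightarrow> P (P (P Am A) AD) A = P X A \<and> P Ak X = P Ak AD \<and> X = P (P X A) AD)"
proof -
  interpret T: monoid "mprod M" "tid M"
    using monoid_mprod[OF assms(1)] .
  have drazin: "T.is_drazin_inverse A k (drazin M A)"
    using drazin_is_drazin_inverse[OF assms(1), of A] unfolding assms(2) .
  have inner: "mprod M (mprod M A Am) A = A"
    using assms(3) by (simp add: one_inverses_def)
  note chars = T.one_D_inverse_char_b[OF drazin inner] T.one_D_inverse_char_c[OF drazin inner]
    T.one_D_inverse_char_d[OF drazin inner] T.one_D_inverse_char_e[OF drazin inner]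
  show ?thesis
    using chars unfolding P_def AD_def Ak_def one_D_inverse_def monoid_pow_eq_tpow[OF assms(1)]
    by blast
qed

end
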